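(* In Setting (S), for every $0\le i\le \ell$, $|V(G_i)|\ge n\left(1-\frac{i}{2\log n}\right)$.
   Context: Median graph: every triple $x,y,z$ of vertices has $|I(x,y)\cap I(y,z)\cap I(z,x)|=1$, $I(u,v)=\{x:d(u,x)+d(x,v)=d(u,v)\}$. $\Theta$-classes: classes of the reflexive–transitive closure of the relation on edges "opposite edges of a 4-cycle"; deleting a $\Theta$-class $E_i$ of a median graph leaves two components with vertex sets (halfspaces) $H_i',H_i''$. For $u\ne v$, the ladder set $L_{u,v}$ is the set of $\Theta$-classes separating $u$ from $v$ that contain an edge incident to $u$. Setting (S): $(G,\omega)$ is a median graph with $n\ge 3$ vertices and weights $\omega:V(G)\to\mathbb{N}$ such that every $\Theta$-class satisfies $\min\{|H_i'|,|H_i''|\}<n/(2\log n)$ ($\log$ natural); $H_i'$ denotes the smaller (minority) and $H_i''$ the larger halfspace. $v_0$ is the unique vertex in all majority halfspaces; $u_{\max}$ maximizes $d(v_0,u)+\omega(u)$ (chosen $=v_0$ if possible) and $u_{\max}\ne v_0$ is assumed. $L(G)=L_{v_0,u_{\max}}=\{E_1,\dots,E_\ell\}$. Large sets: $G_0=G$, $G_{i+1}=G[V(G_i)\setminus H'_{i+1}]$. *)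

theory Defs
  imports Complex_Main
begin

definition simple_graph :: "'a set \<Rightarrow> ('a \<Rightarrow> 'a \<Rightarrow> bool) \<Rightarrow> bool" where
  "simple_graph V adj \<longleftrightarrow> finite V \<and> (\<forall>x y. adj x y \<longrightarrow> adj y x) \<and> (\<forall>x. \<not> adj x x)
     \<and> (\<forall>x y. adj x y \<longrightarrow> x \<in> V \<and> y \<in> V)"

definition walk_in :: "('a \<Rightarrow> 'a \<Rightarrow> bool) \<Rightarrow> 'a list \<Rightarrow> bool" where
  "walk_in R xs \<longleftrightarrow> xs \<noteq> [] \<and> (\<forall>i. Suc i < length xs \<longrightarrow> R (xs ! i) (xs ! Suc i))"

definition connected_graph :: "'a set \<Rightarrow> ('a \<Rightarrow> 'a \<Rightarrow> bool) \<Rightarrow> bool" where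
  "connected_graph V adj \<longleftrightarrow> (\<forall>x\<in>V. \<forall>y\<in>V. \<exists>xs. walk_in adj xs \<and> hd xs = x \<and> last xs = y)"

definition gdist :: "('a \<Rightarrow> 'a \<Rightarrow> bool) \<Rightarrow> 'a \<Rightarrow> 'a \<Rightarrow> nat" where
  "gdist adj x y = (LEAST k. \<exists>xs. walk_in adj xs \<and> hd xs = x \<and> last xs = y \<and> length xs = Suc k)"

definition interval :: "'a set \<Rightarrow> ('a \<Rightarrow> 'a \<Rightarrow> bool) \<Rightarrow> 'a \<Rightarrow> 'a \<Rightarrow> 'a set" where
  "interval V adj u v = {x \<in> V. gdist adj u x + gdist adj x v = gdist adj u v}"

definition median_graph :: "'a set \<Rightarrow> ('a \<Rightarrow> 'a \<Rightarrow> bool) \<Rightarrow> bool" where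
  "median_graph V adj \<longleftrightarrow> simple_graph V adj \<and> connected_graph V adj \<and>
     (\<forall>x\<in>V. \<forall>y\<in>V. \<forall>z\<in>V.
        card (interval V adj x y \<inter> interval V adj y z \<inter> interval V adj z x) = 1)"

definition edges :: "('a \<Rightarrow> 'a \<Rightarrow> bool) \<Rightarrow> 'a set set" where
  "edges adj = {{a, b} | a b. adj a b}"

definition opposite :: "('a \<Rightarrow> 'a \<Rightarrow> bool) \<Rightarrow> 'a set \<Rightarrow> 'a set \<Rightarrow> bool" where
  "opposite adj e f \<longleftrightarrow> (\<exists>a b c d. e = {a, b} \<and> f = {c, d} \<and> distinct [a, b, c, d] \<and>
      adj a b \<and> adj b d \<and> adj d c \<and> adj c a)"

definition theta :: "('a \<Rightarrow> 'a \<Rightarrow> bool) \<Rightarrow> 'a set \<Rightarrow> 'a set \<Rightarrow> bool" where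
  "theta adj e f \<longleftrightarrow> e \<in> edges adj \<and> f \<in> edges adj \<and> (e, f) \<in> {(e, f). opposite adj e f}\<^sup>*"

definition theta_classes :: "('a \<Rightarrow> 'a \<Rightarrow> bool) \<Rightarrow> 'a set set set" where
  "theta_classes adj = {{f. theta adj e f} | e. e \<in> edges adj}"

definition comp_del :: "'a set \<Rightarrow> ('a \<Rightarrow> 'a \<Rightarrow> bool) \<Rightarrow> 'a set set \<Rightarrow> 'a \<Rightarrow> 'a set" where
  "comp_del V adj C a = {x \<in> V. \<exists>xs. walk_in (\<lambda>u v. adj u v \<and> {u, v} \<notin> C) xs \<and> hd xs = a \<and> last xs = x}"

text \<open>The minority (smaller) and majority (larger) halfspaces of a Theta-class C:
  the two components of G - C, namely those of the endpoints of any edge of C.\<close>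

definition minority :: "'a set \<Rightarrow> ('a \<Rightarrow> 'a \<Rightarrow> bool) \<Rightarrow> 'a set set \<Rightarrow> 'a set" where
  "minority V adj C = (SOME H. \<exists>a b. {a, b} \<in> C \<and> adj a b \<and> H = comp_del V adj C a \<and>
       card H < card (comp_del V adj C b))"

definition majority :: "'a set \<Rightarrow> ('a \<Rightarrow> 'a \<Rightarrow> bool) \<Rightarrow> 'a set set \<Rightarrow> 'a set" where
  "majority V adj C = (SOME H. \<exists>a b. {a, b} \<in> C \<and> adj a b \<and> H = comp_del V adj C b \<and>
       card (comp_del V adj C a) < card H)"

definition ladder_set :: "'a set \<Rightarrow> ('a \<Rightarrow> 'a \<Rightarrow> bool) \<Rightarrow> 'a \<Rightarrow> 'a \<Rightarrow> 'a set set set" where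
  "ladder_set V adj u v = {C \<in> theta_classes adj. v \<notin> comp_del V adj C u \<and>
       (\<exists>w. adj u w \<and> {u, w} \<in> C)}"

text \<open>Large sets: V(G_0) = V, V(G_{i+1}) = V(G_i) - H'_{i+1}, for an enumeration Es = [E_1,...,E_l].\<close>

fun large_set :: "'a set \<Rightarrow> ('a \<Rightarrow> 'a \<Rightarrow> bool) \<Rightarrow> 'a set set list \<Rightarrow> nat \<Rightarrow> 'a set" where
  "large_set V adj Es 0 = V"
| "large_set V adj Es (Suc i) = large_set V adj Es i - minority V adj (Es ! i)"

end

theory Submission
  imports Defs
begin

text \<open>Only the fact that each \<open>E\<^sub>i\<close> is a Theta-class matters. In a median graph every edge of the Theta-class of
  ab leads from a vertex closer to a to one closer to b (this is propagated across squares by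
  uniqueness of medians). So a shortest path from a vertex to the nearer end of ab avoids the class,
  and the two components of \<open>G - E\<^sub>i\<close> cover V. The minority halfspace is therefore the
  smaller one and has fewer than \<open>n/(2 log n)\<close> vertices, and deleting i of them leaves at least
  \<open>n - i n/(2 log n)\<close> vertices.\<close>

lemma walk_in_Cons: "walk_in R (x # xs) \<longleftrightarrow> xs = [] \<or> R x (hd xs) \<and> walk_in R xs"
  unfolding walk_in_def by (cases xs) (auto simp: nth_Cons split: nat.splits)

lemma walk_in_singleton [simp]: "walk_in R [x]"
  by (simp add: walk_in_def)

lemma walk_in_append:
  "walk_in R xs \<Longrightarrow> walk_in R ys \<Longrightarrow> R (last xs) (hd ys) \<Longrightarrow> walk_in R (xs @ ys)"
proof (induction xs)
  case (Cons x xs)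
  then show ?case
    by (cases "xs = []") (auto simp: walk_in_Cons)
qed (simp add: walk_in_def)

lemma walk_in_rev: "(\<And>x y. R x y \<Longrightarrow> R y x) \<Longrightarrow> walk_in R xs \<Longrightarrow> walk_in R (rev xs)"
proof (induction xs)
  case (Cons x xs)
  then show ?case
    by (cases "xs = []") (auto intro!: walk_in_append simp: walk_in_Cons last_rev)
qed (simp add: walk_in_def)

lemma walk_in_glue:
  assumes "walk_in R xs" "walk_in R ys" "last xs = hd ys"
  shows "walk_in R (xs @ tl ys)" "hd (xs @ tl ys) = hd xs" "last (xs @ tl ys) = last ys"
    "length (xs @ tl ys) = length xs + length ys - 1"
proof -
  obtain y ys' where ys: "ys = y # ys'" and "xs \<noteq> []"
    using assms by (cases ys) (auto simp: walk_in_def)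
  with assms show "walk_in R (xs @ tl ys)"
    by (cases "ys' = []") (auto intro!: walk_in_append simp: walk_in_Cons)
  show "hd (xs @ tl ys) = hd xs" "last (xs @ tl ys) = last ys"
    "length (xs @ tl ys) = length xs + length ys - 1"
    using ys \<open>xs \<noteq> []\<close> assms(3) by auto
qed

context
  fixes V :: "'a set" and adj :: "'a \<Rightarrow> 'a \<Rightarrow> bool"
  assumes median: "median_graph V adj"
begin

abbreviation (input) d :: "'a \<Rightarrow> 'a \<Rightarrow> nat" where "d \<equiv> gdist adj"

lemma finite_V: "finite V"
  and adj_sym: "adj x y \<Longrightarrow> adj y x"
  and adj_irrefl: "\<not> adj x x"
  and adj_in_V: "adj x y \<Longrightarrow> x \<in> V" "adj x y \<Longrightarrow> y \<in> V"
  using median unfolding median_graph_def simple_graph_def by blast+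

lemma shortest_walk_exists:
  assumes "x \<in> V" "y \<in> V"
  obtains xs where "walk_in adj xs" "hd xs = x" "last xs = y" "length xs = Suc (d x y)"
proof -
  obtain xs where xs: "walk_in adj xs" "hd xs = x" "last xs = y"
    using median assms unfolding median_graph_def connected_graph_def by blast
  then have "length xs = Suc (length xs - 1)"
    by (cases xs) (auto simp: walk_in_def)
  with xs have "\<exists>k xs. walk_in adj xs \<and> hd xs = x \<and> last xs = y \<and> length xs = Suc k"
    by blast
  from LeastI_ex[OF this] show ?thesis
    using that unfolding gdist_def by blast
qed

lemma gdist_le_walk:
  assumes "walk_in adj xs" "hd xs = x" "last xs = y"
  shows "d x y \<le> length xs - 1"
proof -
  have "length xs = Suc (length xs - 1)"
    using assms by (cases xs) (auto simp: walk_in_def)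
  then show ?thesis
    unfolding gdist_def using assms by (intro Least_le) blast
qed

lemma gdist_refl [simp]: "d x x = 0"
  using gdist_le_walk[of "[x]" x x] by simp

lemma gdist_eq_0_iff:
  assumes "x \<in> V" "y \<in> V"
  shows "d x y = 0 \<longleftrightarrow> x = y"
proof
  assume "d x y = 0"
  obtain xs where "walk_in adj xs" "hd xs = x" "last xs = y" "length xs = Suc (d x y)"
    using shortest_walk_exists[OF assms] .
  with \<open>d x y = 0\<close> show "x = y"
    by (cases xs) auto
qed simp

lemma gdist_sym:
  assumes "x \<in> V" "y \<in> V"
  shows "d x y = d y x"
proof -
  have "d y x \<le> d x y" if xy: "x \<in> V" "y \<in> V" for x y
  proof -
    obtain xs where xs: "walk_in adj xs" "hd xs = x" "last xs = y" "length xs = Suc (d x y)"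
      using shortest_walk_exists[OF xy] .
    then have "walk_in adj (rev xs)" "xs \<noteq> []"
      using walk_in_rev[of adj] adj_sym by auto
    then show ?thesis
      using gdist_le_walk[of "rev xs" y x] xs by (simp add: hd_rev last_rev)
  qed
  with assms show ?thesis
    by (meson antisym)
qed

lemma gdist_triangle:
  assumes "x \<in> V" "y \<in> V" "z \<in> V"
  shows "d x z \<le> d x y + d y z"
proof -
  obtain xs where xs: "walk_in adj xs" "hd xs = x" "last xs = y" "length xs = Suc (d x y)"
    using shortest_walk_exists assms by blast
  obtain ys where ys: "walk_in adj ys" "hd ys = y" "last ys = z" "length ys = Suc (d y z)"
    using shortest_walk_exists assms by blast
  show ?thesis
    using gdist_le_walk[OF walk_in_glue(1-3)[OF xs(1) ys(1)]] walk_in_glue(4)[OF xs(1) ys(1)]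
      xs ys by simp
qed

lemma gdist_adj:
  assumes "adj x y"
  shows "d x y = 1"
proof -
  have "d x y \<le> 1"
    using gdist_le_walk[of "[x, y]" x y] assms by (simp add: walk_in_Cons)
  moreover have "x \<noteq> y"
    using assms adj_irrefl by auto
  ultimately show ?thesis
    using gdist_eq_0_iff adj_in_V[OF assms] by fastforce
qed

lemma gdist_Suc_neighbour:
  assumes "x \<in> V" "y \<in> V" "d x y = Suc k"
  obtains x' where "adj x x'" "d x' y = k"
proof -
  obtain xs where xs: "walk_in adj xs" "hd xs = x" "last xs = y" "length xs = Suc (d x y)"
    using shortest_walk_exists[OF assms(1,2)] .
  then obtain ys where ys: "xs = x # ys" "ys \<noteq> []"
    using assms(3) by (cases xs) force+
  then have x': "adj x (hd ys)" "walk_in adj ys"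
    using xs(1) by (auto simp: walk_in_Cons)
  then have "d (hd ys) y \<le> k"
    using gdist_le_walk[of ys "hd ys" y] xs ys assms(3) by auto
  moreover have "Suc k \<le> 1 + d (hd ys) y"
    using gdist_triangle[OF assms(1) adj_in_V(2)[OF x'(1)] assms(2)] gdist_adj[OF x'(1)] assms(3)
    by simp
  ultimately show ?thesis
    using that x'(1) by simp
qed

lemma median_exists:
  assumes "x \<in> V" "y \<in> V" "z \<in> V"
  obtains m where "m \<in> interval V adj x y" "m \<in> interval V adj y z" "m \<in> interval V adj z x"
proof -
  obtain m where "interval V adj x y \<inter> interval V adj y z \<inter> interval V adj z x = {m}"
    using median assms unfolding median_graph_def by (meson card_1_singletonE)
  then show ?thesis
    using that by blast
qed

lemma median_unique:
  assumes "x \<in> V" "y \<in> V" "z \<in> V"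
    and "m \<in> interval V adj x y" "m \<in> interval V adj y z" "m \<in> interval V adj z x"
    and "m' \<in> interval V adj x y" "m' \<in> interval V adj y z" "m' \<in> interval V adj z x"
  shows "m = m'"
proof -
  obtain c where "interval V adj x y \<inter> interval V adj y z \<inter> interval V adj z x = {c}"
    using median assms(1-3) unfolding median_graph_def by (meson card_1_singletonE)
  then show ?thesis
    using assms(4-) by (metis IntI singletonD)
qed

lemma interval_adj_subset:
  assumes "adj x y"
  shows "interval V adj x y \<subseteq> {x, y}"
proof
  fix m assume m: "m \<in> interval V adj x y"
  then have "d x m = 0 \<or> d m y = 0"
    using gdist_adj[OF assms] unfolding interval_def by auto
  then show "m \<in> {x, y}"
    using gdist_eq_0_iff adj_in_V[OF assms] m unfolding interval_def by auto
qed

lemma gdist_adj_cases: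
  assumes "adj x y" "z \<in> V"
  shows "d x z = Suc (d y z) \<or> d y z = Suc (d x z)"
proof -
  have V: "x \<in> V" "y \<in> V"
    using adj_in_V assms(1) by auto
  obtain m where m: "m \<in> interval V adj x y" "m \<in> interval V adj y z" "m \<in> interval V adj z x"
    using median_exists[OF V assms(2)] by metis
  then have "m = x \<or> m = y"
    using interval_adj_subset[OF assms(1)] by auto
  then show ?thesis
    using m(2,3) gdist_adj[OF assms(1)] gdist_adj[OF adj_sym[OF assms(1)]]
      gdist_sym[OF V(1) assms(2)] gdist_sym[OF V(2) assms(2)]
    unfolding interval_def by auto
qed

lemma gdist_path2:
  assumes "adj x y" "adj y z" "x \<noteq> z"
  shows "d x z = 2"
  using gdist_adj_cases[OF adj_sym[OF assms(1)] adj_in_V(2)[OF assms(2)]] gdist_adj[OF assms(2)]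
    gdist_eq_0_iff adj_in_V assms by force

lemma gdist_edge_sides:
  assumes "adj a b" "x \<in> V"
  shows "d x a = Suc (d x b) \<or> d x b = Suc (d x a)"
  using gdist_adj_cases[OF assms] gdist_sym[OF assms(2)] adj_in_V[OF assms(1)] by metis

text \<open>If an edge uv of a square uvv'u' crosses from the a-side to the b-side of the edge ab, so
  does the opposite edge u'v'. Otherwise the distances to a or to b force two distinct vertices
  of the square to be medians of the same triple.\<close>

lemma square_keeps_side:
  assumes ab: "adj a b"
    and square: "adj u v" "adj u u'" "adj v v'" "adj u' v'" "distinct [u, v, u', v']"
    and u: "d u a < d u b" and v: "d v b < d v a"
  shows "d u' a < d u' b"
proof (rule ccontr)
  assume u': "\<not> d u' a < d u' b"
  have V: "a \<in> V" "b \<in> V" "u \<in> V" "v \<in> V" "u' \<in> V" "v' \<in> V"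
    using adj_in_V ab square by blast+
  have one: "d u v = 1" "d v u = 1" "d u u' = 1" "d u' u = 1"
    "d v v' = 1" "d v' v = 1" "d u' v' = 1" "d v' u' = 1"
    using gdist_adj adj_sym square by blast+
  have two: "d v u' = 2" "d u v' = 2"
    using gdist_path2 adj_sym square by auto
  have sym: "d a u = d u a" "d a v = d v a" "d a v' = d v' a"
    "d b u = d u b" "d b v = d v b" "d b u' = d u' b"
    by (simp_all add: gdist_sym[OF V(1)] gdist_sym[OF V(2)] V)
  have ub: "d u b = Suc (d u a)"
    using gdist_edge_sides[OF ab V(3)] u by linarith
  have v_dists: "d v b = d u a" "d v a = Suc (d u a)"
    using gdist_edge_sides[OF ab V(4)] gdist_adj_cases[OF square(1) V(1)]
      gdist_adj_cases[OF square(1) V(2)] ub v by linarith+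
  have u'_dists: "d u' b = d u a" "d u' a = Suc (d u a)"
    using gdist_edge_sides[OF ab V(5)] gdist_adj_cases[OF square(2) V(1)]
      gdist_adj_cases[OF square(2) V(2)] ub u' by linarith+
  have "d v' a = d u a \<or> d v' a = Suc (Suc (d u a))"
    using gdist_adj_cases[OF square(3) V(1)] v_dists by linarith
  moreover have "d v' b = Suc (d u a)" if "d v' a = Suc (Suc (d u a))"
    using gdist_edge_sides[OF ab V(6)] gdist_adj_cases[OF square(3) V(2)] v_dists that by linarith
  ultimately have "d v' a = d u a \<and> d u' a = Suc (d u a) \<and> d v a = Suc (d u a)
    \<or> d v' b = Suc (d v b) \<and> d u b = Suc (d v b) \<and> d u' b = d v b"
    using ub v_dists u'_dists by auto
  then show False
  proof
    assume "d v' a = d u a \<and> d u' a = Suc (d u a) \<and> d v a = Suc (d u a)"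
    then have "u = v'"
      by (intro median_unique[of v u' a]) (simp_all add: interval_def V one two sym)
    then show False
      using square(5) by simp
  next
    assume "d v' b = Suc (d v b) \<and> d u b = Suc (d v b) \<and> d u' b = d v b"
    then have "v = u'"
      by (intro median_unique[of u v' b]) (simp_all add: interval_def V one two sym)
    then show False
      using square(5) by simp
  qed
qed

lemma theta_edge_crosses:
  assumes ab: "adj a b"
    and "({a, b}, f) \<in> {(e, f). opposite adj e f}\<^sup>*"
  obtains u v where "f = {u, v}" "adj u v" "d u a < d u b" "d v b < d v a"
proof -
  from assms(2) have "\<exists>u v. f = {u, v} \<and> adj u v \<and> d u a < d u b \<and> d v b < d v a"
  proof (induction rule: rtrancl_induct)
    case base
    show ?case
      using ab by (intro exI[of _ a] exI[of _ b]) (simp add: gdist_adj adj_sym)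
  next
    case (step f g)
    from step.IH obtain u v where uv: "f = {u, v}" "adj u v" "d u a < d u b" "d v b < d v a"
      by blast
    from step.hyps(2) obtain p q r s where pqrs: "f = {p, q}" "g = {r, s}" "distinct [p, q, r, s]"
      "adj p q" "adj q s" "adj s r" "adj r p"
      unfolding opposite_def by blast
    have "u = p \<and> v = q \<or> u = q \<and> v = p"
      using uv(1) pqrs(1) by (auto simp: doubleton_eq_iff)
    then show ?case
    proof
      assume "u = p \<and> v = q"
      then have "d r a < d r b" "d s b < d s a"
        using square_keeps_side[OF ab, of u v r s] square_keeps_side[OF adj_sym[OF ab], of v u s r]
          pqrs uv adj_sym by auto
      then show ?case
        using pqrs adj_sym by blast
    next
      assume "u = q \<and> v = p"
      then have "d s a < d s b" "d r b < d r a"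
        using square_keeps_side[OF ab, of u v s r] square_keeps_side[OF adj_sym[OF ab], of v u r s]
          pqrs uv adj_sym by auto
      then show ?case
        using pqrs adj_sym by (metis insert_commute)
    qed
  qed
  then show ?thesis
    using that by blast
qed

lemma comp_del_extend:
  assumes "x' \<in> comp_del V adj C a" "adj x' x" "{x', x} \<notin> C"
  shows "x \<in> comp_del V adj C a"
proof -
  obtain xs where xs: "walk_in (\<lambda>u v. adj u v \<and> {u, v} \<notin> C) xs" "hd xs = a" "last xs = x'"
    using assms(1) unfolding comp_del_def by blast
  then have "walk_in (\<lambda>u v. adj u v \<and> {u, v} \<notin> C) (xs @ [x])"
    using assms by (intro walk_in_append) auto
  moreover have "xs \<noteq> []"
    using xs(1) by (simp add: walk_in_def)
  ultimately show ?thesis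
    unfolding comp_del_def using xs adj_in_V(2)[OF assms(2)] by (auto intro!: exI[of _ "xs @ [x]"])
qed

text \<open>The Theta-class of ab separates the vertices closer to a from those closer to b: a shortest
  path from such a vertex to a stays on the a-side and hence uses no edge of the class.\<close>

lemma closer_in_comp_del:
  assumes ab: "adj a b" and x: "x \<in> V" "d x a < d x b"
  shows "x \<in> comp_del V adj {f. theta adj {a, b} f} a"
  using x
proof (induction "d x a" arbitrary: x)
  case 0
  then show ?case
    using adj_in_V[OF ab] gdist_eq_0_iff unfolding comp_del_def by (auto intro!: exI[of _ "[a]"])
next
  case (Suc k x)
  obtain x' where x': "adj x x'" "d x' a = k"
    using gdist_Suc_neighbour[OF Suc.prems(1) adj_in_V(1)[OF ab] Suc.hyps(2)[symmetric]] .
  have "d x b \<le> Suc (d x' b)"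
    using gdist_triangle[OF Suc.prems(1) adj_in_V(2)[OF x'(1)] adj_in_V(2)[OF ab]] gdist_adj[OF x'(1)]
    by simp
  then have x'_side: "d x' a < d x' b"
    using x'(2) Suc.hyps(2) Suc.prems(2) by simp
  then have "x' \<in> comp_del V adj {f. theta adj {a, b} f} a"
    using Suc.hyps(1)[of x'] x'(2) adj_in_V(2)[OF x'(1)] by simp
  moreover have "{x', x} \<notin> {f. theta adj {a, b} f}"
  proof
    assume "{x', x} \<in> {f. theta adj {a, b} f}"
    then have "({a, b}, {x', x}) \<in> {(e, f). opposite adj e f}\<^sup>*"
      unfolding theta_def by simp
    then obtain u v where "{x', x} = {u, v}" "adj u v" "d u a < d u b" "d v b < d v a"
      by (rule theta_edge_crosses[OF ab])
    then show False
      using x'_side Suc.prems(2) by (auto simp: doubleton_eq_iff)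
  qed
  ultimately show ?case
    using comp_del_extend adj_sym[OF x'(1)] by blast
qed

lemma halfspaces_cover:
  assumes "C \<in> theta_classes adj"
  obtains a b where "{a, b} \<in> C" "adj a b" "V \<subseteq> comp_del V adj C a \<union> comp_del V adj C b"
proof -
  obtain a b where ab: "adj a b" and C: "C = {f. theta adj {a, b} f}"
    using assms unfolding theta_classes_def edges_def by blast
  have "{a, b} \<in> C"
    using ab C unfolding theta_def edges_def by blast
  moreover have "C = {f. theta adj {b, a} f}"
    using C by (simp add: insert_commute)
  then have "V \<subseteq> comp_del V adj C a \<union> comp_del V adj C b"
    using closer_in_comp_del[OF ab] closer_in_comp_del[OF adj_sym[OF ab]] C
      gdist_edge_sides[OF ab] by (metis Un_iff lessI subsetI)
  ultimately show ?thesis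
    using that ab by blast
qed

lemma minority_smaller_halfspace:
  assumes C: "C \<in> theta_classes adj"
    and small: "\<And>a b. {a, b} \<in> C \<Longrightarrow> adj a b \<Longrightarrow>
      2 * min (card (comp_del V adj C a)) (card (comp_del V adj C b)) < card V"
  obtains a b where "{a, b} \<in> C" "adj a b" "minority V adj C = comp_del V adj C a"
    "card (comp_del V adj C a) < card (comp_del V adj C b)"
proof -
  obtain a b where ab: "{a, b} \<in> C" "adj a b" "V \<subseteq> comp_del V adj C a \<union> comp_del V adj C b"
    using halfspaces_cover[OF C] .
  have "card V \<le> card (comp_del V adj C a \<union> comp_del V adj C b)"
    using ab(3) finite_V by (intro card_mono) (auto simp: comp_del_def)
  also have "\<dots> \<le> card (comp_del V adj C a) + card (comp_del V adj C b)"
    by (rule card_Un_le)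
  finally have "card (comp_del V adj C a) \<noteq> card (comp_del V adj C b)"
    using small[OF ab(1,2)] by simp
  then have "\<exists>H a b. {a, b} \<in> C \<and> adj a b \<and> H = comp_del V adj C a \<and>
      card H < card (comp_del V adj C b)"
    using ab(1,2) adj_sym[OF ab(2)] by (metis insert_commute nat_neq_iff)
  then have "\<exists>a b. {a, b} \<in> C \<and> adj a b \<and>
      minority V adj C = comp_del V adj C a \<and> card (comp_del V adj C a) < card (comp_del V adj C b)"
    unfolding minority_def by (rule someI2_ex) blast
  then show ?thesis
    using that by blast
qed

lemma minority_card_less:
  assumes C: "C \<in> theta_classes adj"
    and small: "\<forall>a b. {a, b} \<in> C \<and> adj a b \<longrightarrow>
      real (min (card (comp_del V adj C a)) (card (comp_del V adj C b))) < B"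
    and B: "B \<le> real (card V) / 2"
  shows "finite (minority V adj C)" "real (card (minority V adj C)) < B"
proof -
  have "2 * min (card (comp_del V adj C a)) (card (comp_del V adj C b)) < card V"
    if "{a, b} \<in> C" "adj a b" for a b
  proof -
    have "real (min (card (comp_del V adj C a)) (card (comp_del V adj C b))) < B"
      using small that by blast
    with B show ?thesis
      by linarith
  qed
  then obtain a b where ab: "{a, b} \<in> C" "adj a b" "minority V adj C = comp_del V adj C a"
    "card (comp_del V adj C a) < card (comp_del V adj C b)"
    using minority_smaller_halfspace[OF C] by blast
  moreover have "real (min (card (comp_del V adj C a)) (card (comp_del V adj C b))) < B"
    using small ab(1,2) by blast
  ultimately show "real (card (minority V adj C)) < B"
    by (simp add: min_def)
  show "finite (minority V adj C)"
    using ab(3) finite_V unfolding comp_del_def by simp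
qed

end

lemma card_large_set_ge:
  assumes "\<And>j. j < i \<Longrightarrow> finite (minority V adj (Es ! j))"
    and "\<And>j. j < i \<Longrightarrow> real (card (minority V adj (Es ! j))) \<le> B"
  shows "real (card (large_set V adj Es i)) \<ge> real (card V) - real i * B"
  using assms
proof (induction i)
  case (Suc i)
  have "card (large_set V adj Es i) - card (minority V adj (Es ! i))
      \<le> card (large_set V adj Es (Suc i))"
    using diff_card_le_card_Diff[OF Suc.prems(1)] by simp
  then have "real (card (large_set V adj Es i)) \<le>
      real (card (large_set V adj Es (Suc i))) + real (card (minority V adj (Es ! i)))"
    by linarith
  moreover have "real (card V) - real i * B \<le> real (card (large_set V adj Es i))"
    using Suc by simp
  ultimately show ?case
    using Suc.prems(2)[of i] by (simp add: algebra_simps)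
qed simp

lemma one_le_ln_of_nat:
  assumes "n \<ge> 3"
  shows "1 \<le> ln (real n)"
proof -
  have "exp 1 \<le> real n"
    using exp_le assms by linarith
  then show ?thesis
    using assms by (subst ln_ge_iff) auto
qed

theorem mainTheorem9:
  fixes V :: "'a set" and adj :: "'a \<Rightarrow> 'a \<Rightarrow> bool" and \<omega> :: "'a \<Rightarrow> nat"
    and v0 umax :: 'a and Es :: "'a set set list" and n :: nat
  assumes med: "median_graph V adj"
    and n_def: "n = card V" and n3: "n \<ge> 3"
    and small: "\<forall>C\<in>theta_classes adj. \<forall>a b. {a, b} \<in> C \<and> adj a b \<longrightarrow>
        real (min (card (comp_del V adj C a)) (card (comp_del V adj C b))) < real n / (2 * ln (real n))"
    and v0V: "v0 \<in> V"
    and v0: "\<forall>C\<in>theta_classes adj. v0 \<in> majority V adj C"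
    and umaxV: "umax \<in> V"
    and umax_max: "\<forall>u\<in>V. gdist adj v0 u + \<omega> u \<le> gdist adj v0 umax + \<omega> umax"
    and v0_not_max: "gdist adj v0 v0 + \<omega> v0 < gdist adj v0 umax + \<omega> umax"
    and umax_ne: "umax \<noteq> v0"
    and Es_dist: "distinct Es"
    and Es_set: "set Es = ladder_set V adj v0 umax"
  shows "\<forall>i \<le> length Es.
           real (card (large_set V adj Es i)) \<ge> real n * (1 - real i / (2 * ln (real n)))"
proof (intro allI impI)
  fix i assume i: "i \<le> length Es"
  define B where "B = real n / (2 * ln (real n))"
  have "B \<le> real (card V) / 2"
    unfolding B_def n_def using one_le_ln_of_nat[OF n3] n_def by (intro divide_left_mono) auto
  moreover have "Es ! j \<in> theta_classes adj" if "j < length Es" for j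
    using nth_mem[OF that] Es_set unfolding ladder_set_def by blast
  ultimately have "finite (minority V adj (Es ! j))" "real (card (minority V adj (Es ! j))) \<le> B"
    if "j < i" for j
    using minority_card_less[OF med, of "Es ! j" B] small that i unfolding B_def
    by (auto intro: less_imp_le)
  then have "real (card V) - real i * B \<le> real (card (large_set V adj Es i))"
    by (rule card_large_set_ge)
  moreover have "real n * (1 - real i / (2 * ln (real n))) = real n - real i * B"
    unfolding B_def by (simp add: algebra_simps)
  ultimately show "real (card (large_set V adj Es i)) \<ge> real n * (1 - real i / (2 * ln (real n)))"
    using n_def by simp
qed

end
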